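(* Let $F$ be a field of characteristic two, let $\mathfrak b$ be a $4$-dimensional isotropic symmetric bilinear form over $F$, and let $K=F(\sqrt\alpha)$ for some $\alpha\in F^\times\setminus F^{\times2}$. If $\mathfrak b\otimes\langle\!\langle\alpha\rangle\!\rangle$ is (isometric to) a bilinear Pfister form, then $\mathfrak b_K$ is similar to a bilinear Pfister form.
   Context: $\langle\!\langle\alpha\rangle\!\rangle=\langle1,\alpha\rangle$; a bilinear Pfister form is a form $\langle1,\alpha_1\rangle\otimes\cdots\otimes\langle1,\alpha_n\rangle$ with $\alpha_i\in F^\times$. Two forms are similar if one is isometric to a nonzero scalar multiple of the other. $\mathfrak b_K$ is the scalar extension to $K$. *)

theory Defs
  imports "Jordan_Normal_Form.Matrix"
begin

text \<open>Symmetric bilinear forms on F^n are represented by their Gram matrices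
  (symmetric n x n matrices); every form is isometric to the form of its Gram matrix.\<close>

definition sym_bil_form :: "nat \<Rightarrow> 'a::field mat \<Rightarrow> bool" where
  "sym_bil_form n B \<longleftrightarrow> B \<in> carrier_mat n n \<and> transpose_mat B = B"

definition isometric :: "'a::field mat \<Rightarrow> 'a mat \<Rightarrow> bool" where
  "isometric A B \<longleftrightarrow> (\<exists>n P. A \<in> carrier_mat n n \<and> B \<in> carrier_mat n n \<and>
      P \<in> carrier_mat n n \<and> invertible_mat P \<and> transpose_mat P * A * P = B)"

definition isotropic :: "'a::field mat \<Rightarrow> bool" where
  "isotropic B \<longleftrightarrow> (\<exists>v. v \<in> carrier_vec (dim_row B) \<and> v \<noteq> 0\<^sub>v (dim_row B) \<and> v \<bullet> (B *\<^sub>v v) = 0)"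

definition tensor_form :: "'a::field mat \<Rightarrow> 'a mat \<Rightarrow> 'a mat" where
  "tensor_form A B = mat (dim_row A * dim_row B) (dim_col A * dim_col B)
     (\<lambda>(i,j). A $$ (i div dim_row B, j div dim_col B) * B $$ (i mod dim_row B, j mod dim_col B))"

definition pf1 :: "'a::field \<Rightarrow> 'a mat" where
  "pf1 a = mat 2 2 (\<lambda>(i,j). if i = j then (if i = 0 then 1 else a) else 0)"

fun pfister_mat :: "'a::field list \<Rightarrow> 'a mat" where
  "pfister_mat [] = mat 1 1 (\<lambda>_. 1)"
| "pfister_mat (a # as) = tensor_form (pf1 a) (pfister_mat as)"

definition is_bil_pfister :: "'a::field mat \<Rightarrow> bool" where
  "is_bil_pfister B \<longleftrightarrow> (\<exists>as. (\<forall>a\<in>set as. a \<noteq> 0) \<and> isometric B (pfister_mat as))"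

definition similar_to_bil_pfister :: "'a::field mat \<Rightarrow> bool" where
  "similar_to_bil_pfister B \<longleftrightarrow> (\<exists>c as. c \<noteq> 0 \<and> (\<forall>a\<in>set as. a \<noteq> 0) \<and>
      isometric B (c \<cdot>\<^sub>m pfister_mat as))"

end

theory Submission
  imports Defs "Jordan_Normal_Form.Determinant"
begin

text \<open>Call a form \<^emph>\<open>detecting\<close> if every anisotropic vector pairs nontrivially with some
  isotropic vector; this is an isometry invariant. In characteristic 2 the quadratic form of
  \<open>\<langle>\<langle>a,b,c\<rangle>\<rangle>\<close> is multiplicative, so if it is isotropic it has an isotropic \<open>x\<close> with
  \<open>x\<^sub>0 \<noteq> 0\<close>, and for anisotropic \<open>y\<close> the product \<open>z = x y\<close> is isotropic with
  \<open>b(z,y) = q(y) x\<^sub>0 \<noteq> 0\<close>. Hence \<open>\<mathfrak>b \<otimes> \<langle>\<langle>\<alpha>\<rangle>\<rangle>\<close> (isotropic because \<open>\<mathfrak>b\<close> is) is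
  detecting and nondegenerate. Writing \<open>K\<^sup>4 = F\<^sup>4 \<oplus> F\<^sup>4 \<surd>\<alpha>\<close>, the quadratic form of
  \<open>\<mathfrak>b\<^sub>K\<close> is that of \<open>\<mathfrak>b \<otimes> \<langle>\<langle>\<alpha>\<rangle>\<rangle>\<close> on \<open>F\<^sup>8\<close> (the cross terms vanish in characteristic 2),
  and the \<open>F\<close>-part of \<open>\<mathfrak>b\<^sub>K\<close> is \<open>\<mathfrak>b \<otimes> \<langle>\<langle>\<alpha>\<rangle>\<rangle>\<close>; so \<open>\<mathfrak>b\<^sub>K\<close> is again detecting and
  nondegenerate. Finally, a nondegenerate isotropic 4-dimensional form that is not alternating
  splits off a plane with Gram matrix \<open>[[0,1],[1,c]]\<close>, \<open>c \<noteq> 0\<close>. Its orthogonal complement is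
  either hyperbolic, giving \<open>c\<langle>\<langle>1,1\<rangle>\<rangle>\<close>, or diagonal \<open>\<langle>d,e\<rangle>\<close>; if \<open>\<langle>d,e\<rangle>\<close> is
  isotropic the form is \<open>c\<langle>\<langle>d/c,1\<rangle>\<rangle>\<close>, and if it is anisotropic the form is not detecting.\<close>

section \<open>Bilinear forms given by Gram matrices\<close>

definition bil :: "'a::field mat \<Rightarrow> 'a vec \<Rightarrow> 'a vec \<Rightarrow> 'a" where
  "bil A x y = x \<bullet> (A *\<^sub>v y)"

lemma bil_add_left: "A \<in> carrier_mat n n \<Longrightarrow> x \<in> carrier_vec n \<Longrightarrow> y \<in> carrier_vec n \<Longrightarrow> z \<in> carrier_vec n
  \<Longrightarrow> bil A (x + y) z = bil A x z + bil A y z"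
  unfolding bil_def by (rule add_scalar_prod_distrib[of _ n], auto)

lemma bil_add_right: "A \<in> carrier_mat n n \<Longrightarrow> x \<in> carrier_vec n \<Longrightarrow> y \<in> carrier_vec n \<Longrightarrow> z \<in> carrier_vec n
  \<Longrightarrow> bil A x (y + z) = bil A x y + bil A x z"
  unfolding bil_def by (simp add: mult_add_distrib_mat_vec[of A n n] scalar_prod_add_distrib[of _ n])

lemma bil_smult_left: "A \<in> carrier_mat n n \<Longrightarrow> x \<in> carrier_vec n \<Longrightarrow> z \<in> carrier_vec n
  \<Longrightarrow> bil A (a \<cdot>\<^sub>v x) z = a * bil A x z"
  unfolding bil_def by (rule smult_scalar_prod_distrib[of _ n], auto)

lemma bil_smult_right: "A \<in> carrier_mat n n \<Longrightarrow> x \<in> carrier_vec n \<Longrightarrow> z \<in> carrier_vec n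
  \<Longrightarrow> bil A x (a \<cdot>\<^sub>v z) = a * bil A x z"
  unfolding bil_def by (simp add: mult_mat_vec[of A n n] scalar_prod_smult_distrib[of _ n])

lemma bil_commute: "A \<in> carrier_mat n n \<Longrightarrow> transpose_mat A = A \<Longrightarrow> x \<in> carrier_vec n \<Longrightarrow> y \<in> carrier_vec n
  \<Longrightarrow> bil A x y = bil A y x"
  unfolding bil_def by (metis comm_scalar_prod mult_mat_vec_carrier transpose_vec_mult_scalar)

lemma bil_unit_left: "A \<in> carrier_mat n n \<Longrightarrow> x \<in> carrier_vec n \<Longrightarrow> k < n
  \<Longrightarrow> bil A (unit_vec n k) x = (A *\<^sub>v x) $ k"
  unfolding bil_def by simp

lemma bil_zero_left: "A \<in> carrier_mat n n \<Longrightarrow> x \<in> carrier_vec n \<Longrightarrow> bil A (0\<^sub>v n) x = 0"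
  unfolding bil_def by simp

lemma bil_zero_right: "A \<in> carrier_mat n n \<Longrightarrow> x \<in> carrier_vec n \<Longrightarrow> bil A x (0\<^sub>v n) = 0"
proof -
  assume "A \<in> carrier_mat n n" "x \<in> carrier_vec n"
  moreover from this have "A *\<^sub>v 0\<^sub>v n = 0\<^sub>v n" by (intro eq_vecI) auto
  ultimately show ?thesis unfolding bil_def by simp
qed

lemma bil_congruence:
  assumes A: "A \<in> carrier_mat n n" and P: "P \<in> carrier_mat n n"
    and x: "x \<in> carrier_vec n" and y: "y \<in> carrier_vec n"
  shows "bil (transpose_mat P * A * P) x y = bil A (P *\<^sub>v x) (P *\<^sub>v y)"
proof -
  have "x \<bullet> ((transpose_mat P * A * P) *\<^sub>v y) = x \<bullet> (transpose_mat P *\<^sub>v (A *\<^sub>v (P *\<^sub>v y)))"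
    using A P y by (simp add: assoc_mult_mat_vec[of _ n n _ n])
  also have "\<dots> = (transpose_mat P *\<^sub>v (A *\<^sub>v (P *\<^sub>v y))) \<bullet> x"
    by (rule comm_scalar_prod[of _ n], insert A P x y, auto)
  also have "\<dots> = (A *\<^sub>v (P *\<^sub>v y)) \<bullet> (P *\<^sub>v x)"
    by (rule transpose_vec_mult_scalar[of _ n n], insert A P x y, auto)
  also have "\<dots> = (P *\<^sub>v x) \<bullet> (A *\<^sub>v (P *\<^sub>v y))"
    by (rule comm_scalar_prod[of _ n], insert A P x y, auto)
  finally show ?thesis unfolding bil_def .
qed

lemma mult_unit_vec:
  fixes P :: "'a::field mat"
  assumes P: "P \<in> carrier_mat n n" and j: "j < n"
  shows "P *\<^sub>v unit_vec n j = col P j"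
  using carrier_matD[OF P] j by (intro eq_vecI) auto

lemma entry_eq_bil: "M \<in> carrier_mat n n \<Longrightarrow> i < n \<Longrightarrow> j < n \<Longrightarrow> M $$ (i,j) = bil M (unit_vec n i) (unit_vec n j)"
  unfolding bil_def by simp

lemma congruence_entry:
  assumes A: "A \<in> carrier_mat n n" and P: "P \<in> carrier_mat n n" and ij: "i < n" "j < n"
  shows "(transpose_mat P * A * P) $$ (i,j) = bil A (col P i) (col P j)"
proof -
  have "(transpose_mat P * A * P) $$ (i,j) = bil (transpose_mat P * A * P) (unit_vec n i) (unit_vec n j)"
    by (rule entry_eq_bil, insert A P ij, auto)
  also have "\<dots> = bil A (col P i) (col P j)"
    unfolding bil_congruence[OF A P unit_vec_carrier unit_vec_carrier] mult_unit_vec[OF P ij(1)]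
      mult_unit_vec[OF P ij(2)] ..
  finally show ?thesis .
qed

lemma congruence_mat_of_cols_entry:
  fixes A :: "'a::field mat"
  assumes A: "A \<in> carrier_mat n n" and rs: "length rs = n" "set rs \<subseteq> carrier_vec n"
    and ij: "i < n" "j < n"
  shows "(transpose_mat (mat_of_cols n rs) * A * mat_of_cols n rs) $$ (i,j) = bil A (rs ! i) (rs ! j)"
proof -
  have M: "mat_of_cols n rs \<in> carrier_mat n n" using mat_of_cols_carrier(1)[of n rs] rs(1) by simp
  have "col (mat_of_cols n rs) k = rs ! k" if "k < n" for k
    using rs that by (intro col_mat_of_cols) auto
  thus ?thesis unfolding congruence_entry[OF A M ij] using ij by simp
qed

lemma mult_mat_vec_eq_zeroI:
  assumes A: "A \<in> carrier_mat n n" and x: "x \<in> carrier_vec n"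
    and orth: "\<And>k. k < n \<Longrightarrow> bil A (unit_vec n k) x = 0"
  shows "A *\<^sub>v x = 0\<^sub>v n"
  using A orth by (intro eq_vecI) (auto simp: bil_unit_left[OF A x])

lemma char2_add_self: "(2::'a::comm_ring_1) = 0 \<Longrightarrow> x + x = (0::'a)"
  by (metis mult_2 mult_zero_left)

lemma char2_add_self_left: "(2::'a::comm_ring_1) = 0 \<Longrightarrow> x + (x + y) = (y::'a)"
  by (metis add.assoc add_0 char2_add_self)

lemma char2_eq_if_add_eq_0: "(2::'a::comm_ring_1) = 0 \<Longrightarrow> a + b = 0 \<Longrightarrow> a = (b::'a)"
  by (metis add.commute add_diff_cancel_left' char2_add_self diff_0)

lemma char2_power2_add: "(2::'a::comm_ring_1) = 0 \<Longrightarrow> (x + y)^2 = x^2 + (y::'a)^2"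
  by (simp add: power2_sum)

lemma sum_lessThan_4: "(\<Sum>i<(4::nat). f i) = f 0 + f 1 + f 2 + (f 3 :: 'a::comm_monoid_add)"
  by (simp add: numeral_eq_Suc lessThan_Suc ac_simps)

lemma sum_lessThan_8:
  "(\<Sum>i<(8::nat). f i) = f 0 + f 1 + f 2 + f 3 + f 4 + f 5 + f 6 + (f 7 :: 'a::comm_monoid_add)"
  by (simp add: eval_nat_numeral ac_simps)

lemma less_4_cases: "i < (4::nat) \<Longrightarrow> i = 0 \<or> i = 1 \<or> i = 2 \<or> i = 3"
  by auto

lemma less_8_cases: "i < (8::nat) \<Longrightarrow> i = 0 \<or> i = 1 \<or> i = 2 \<or> i = 3 \<or> i = 4 \<or> i = 5 \<or> i = 6 \<or> i = 7"
  by auto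

lemma invertible_matI_left:
  fixes P :: "'a::field mat"
  assumes "P \<in> carrier_mat n n" "Q \<in> carrier_mat n n" "Q * P = 1\<^sub>m n"
  shows "invertible_mat P"
proof -
  have "P * Q = 1\<^sub>m n" by (rule mat_mult_left_right_inverse[OF assms(2,1,3)])
  thus ?thesis using assms unfolding invertible_mat_def inverts_mat_def by auto
qed

lemma invertible_matE:
  fixes P :: "'a::field mat"
  assumes P: "P \<in> carrier_mat n n" and inv: "invertible_mat P"
  obtains Q where "Q \<in> carrier_mat n n" "P * Q = 1\<^sub>m n" "Q * P = 1\<^sub>m n"
proof -
  from inv obtain Q where "inverts_mat P Q" "inverts_mat Q P" unfolding invertible_mat_def by auto
  hence PQ: "P * Q = 1\<^sub>m n" and QP: "Q * P = 1\<^sub>m (dim_row Q)" using P unfolding inverts_mat_def by auto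
  have "dim_col Q = n" using arg_cong[OF PQ, of dim_col] by simp
  moreover have "dim_row Q = n" using arg_cong[OF QP, of dim_col] P by simp
  ultimately show ?thesis using that PQ QP by auto
qed

definition nondegenerate :: "'a::field mat \<Rightarrow> nat \<Rightarrow> bool" where
  "nondegenerate A n \<longleftrightarrow> (\<forall>x\<in>carrier_vec n. A *\<^sub>v x = 0\<^sub>v n \<longrightarrow> x = 0\<^sub>v n)"

definition isotropic_detects_anisotropic :: "'a::field mat \<Rightarrow> nat \<Rightarrow> bool" where
  "isotropic_detects_anisotropic A n \<longleftrightarrow> (\<forall>y\<in>carrier_vec n. bil A y y \<noteq> 0 \<longrightarrow>
     (\<exists>x\<in>carrier_vec n. bil A x x = 0 \<and> bil A x y \<noteq> 0))"

lemma isometricE: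
  fixes A B :: "'a::field mat"
  assumes "isometric A B" and B: "B \<in> carrier_mat n n"
  obtains P Q where "A \<in> carrier_mat n n" "P \<in> carrier_mat n n" "Q \<in> carrier_mat n n"
    "P * Q = 1\<^sub>m n" "Q * P = 1\<^sub>m n" "transpose_mat P * A * P = B"
proof -
  from assms(1) obtain m P where A: "A \<in> carrier_mat m m" and Bm: "B \<in> carrier_mat m m"
    and P: "P \<in> carrier_mat m m" "invertible_mat P" and PAP: "transpose_mat P * A * P = B"
    unfolding isometric_def by auto
  have "m = n" using B Bm by auto
  obtain Q where "Q \<in> carrier_mat n n" "P * Q = 1\<^sub>m n" "Q * P = 1\<^sub>m n"
    using invertible_matE[OF P] unfolding \<open>m = n\<close> .
  with A P PAP show ?thesis using that unfolding \<open>m = n\<close> by blast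
qed

lemma mult_inverse_vec:
  fixes P :: "'a::field mat"
  assumes "P \<in> carrier_mat n n" "Q \<in> carrier_mat n n" "P * Q = 1\<^sub>m n" "x \<in> carrier_vec n"
  shows "P *\<^sub>v (Q *\<^sub>v x) = x"
  using assms by (simp add: assoc_mult_mat_vec[symmetric, of _ n n _ n])

lemma isometric_sym:
  fixes A B :: "'a::field mat"
  assumes "isometric A B"
  shows "isometric B A"
proof -
  from assms obtain n where B: "B \<in> carrier_mat n n" unfolding isometric_def by auto
  obtain P Q where A: "A \<in> carrier_mat n n" and P: "P \<in> carrier_mat n n" and Q: "Q \<in> carrier_mat n n"
    and PQ: "P * Q = 1\<^sub>m n" and QP: "Q * P = 1\<^sub>m n" and PAP: "transpose_mat P * A * P = B"
    by (rule isometricE[OF assms B])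
  have "transpose_mat Q * B * Q = transpose_mat (P * Q) * A * (P * Q)"
    unfolding PAP[symmetric] transpose_mult[OF P Q]
    using A P Q by (simp add: assoc_mult_mat[of _ n n _ n _ n])
  also have "\<dots> = A" unfolding PQ using A by simp
  finally show ?thesis
    unfolding isometric_def using A B Q invertible_matI_left[OF Q P PQ] by blast
qed

lemma isometric_congruenceI:
  fixes A :: "'a::field mat"
  assumes A: "A \<in> carrier_mat n n" and P: "P \<in> carrier_mat n n" and G: "G \<in> carrier_mat n n"
    and inv: "G * (transpose_mat P * A * P) = 1\<^sub>m n"
  shows "isometric A (transpose_mat P * A * P)"
proof -
  have "(G * transpose_mat P * A) * P = 1\<^sub>m n"
    using A P G inv by (simp add: assoc_mult_mat[of _ n n _ n _ n])
  hence "invertible_mat P" by (rule invertible_matI_left[OF P, rotated]) (use A P G in auto)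
  thus ?thesis unfolding isometric_def
    by (intro exI[of _ n] exI[of _ P]) (use A P in auto)
qed

lemma nondegenerate_if_isometric:
  fixes A B :: "'a::field mat"
  assumes iso: "isometric A B" and B: "B \<in> carrier_mat n n" and nd: "nondegenerate B n"
  shows "nondegenerate A n"
  unfolding nondegenerate_def
proof (intro ballI impI)
  fix x assume x: "x \<in> carrier_vec n" and Ax: "A *\<^sub>v x = 0\<^sub>v n"
  obtain P Q where A: "A \<in> carrier_mat n n" and PQ: "P \<in> carrier_mat n n" "Q \<in> carrier_mat n n"
    "P * Q = 1\<^sub>m n" and "Q * P = 1\<^sub>m n" and PAP: "transpose_mat P * A * P = B"
    by (rule isometricE[OF iso B])
  have "B *\<^sub>v (Q *\<^sub>v x) = transpose_mat P *\<^sub>v (A *\<^sub>v (P *\<^sub>v (Q *\<^sub>v x)))"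
    unfolding PAP[symmetric] using A PQ x by (simp add: assoc_mult_mat_vec[of _ n n _ n])
  also have "\<dots> = 0\<^sub>v n" using mult_inverse_vec[OF PQ x] Ax PQ by (intro eq_vecI) auto
  finally have "Q *\<^sub>v x = 0\<^sub>v n" using nd PQ x unfolding nondegenerate_def by auto
  hence "x = P *\<^sub>v 0\<^sub>v n" using mult_inverse_vec[OF PQ x] by simp
  thus "x = 0\<^sub>v n" using PQ by (intro eq_vecI) auto
qed

lemma isotropic_if_isometric:
  fixes A B :: "'a::field mat"
  assumes iso: "isometric A B" and B: "B \<in> carrier_mat n n" and A_iso: "isotropic A"
  shows "isotropic B"
proof -
  obtain P Q where A: "A \<in> carrier_mat n n" and PQ: "P \<in> carrier_mat n n" "Q \<in> carrier_mat n n"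
    "P * Q = 1\<^sub>m n" and "Q * P = 1\<^sub>m n" and PAP: "transpose_mat P * A * P = B"
    by (rule isometricE[OF iso B])
  obtain v where v: "v \<in> carrier_vec n" "v \<noteq> 0\<^sub>v n" "bil A v v = 0"
    using A_iso A unfolding isotropic_def bil_def by auto
  have PQv: "P *\<^sub>v (Q *\<^sub>v v) = v" by (rule mult_inverse_vec[OF PQ v(1)])
  have "Q *\<^sub>v v \<noteq> 0\<^sub>v n"
  proof
    assume "Q *\<^sub>v v = 0\<^sub>v n"
    hence "v = P *\<^sub>v 0\<^sub>v n" using PQv by simp
    thus False using v(2) PQ by (auto intro!: eq_vecI)
  qed
  moreover have "bil B (Q *\<^sub>v v) (Q *\<^sub>v v) = 0"
    unfolding PAP[symmetric] bil_congruence[OF A PQ(1) mult_mat_vec_carrier[OF PQ(2) v(1)]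
      mult_mat_vec_carrier[OF PQ(2) v(1)]] PQv by (rule v(3))
  moreover have "Q *\<^sub>v v \<in> carrier_vec n" using PQ v(1) by simp
  ultimately show ?thesis using B unfolding isotropic_def bil_def by (intro exI[of _ "Q *\<^sub>v v"]) auto
qed

lemma isometric_represents:
  fixes A B :: "'a::field mat"
  assumes iso: "isometric A B" and B: "B \<in> carrier_mat n n" and y: "y \<in> carrier_vec n"
  shows "\<exists>x\<in>carrier_vec n. bil A x x = bil B y y"
proof -
  obtain P Q where A: "A \<in> carrier_mat n n" and P: "P \<in> carrier_mat n n" and "Q \<in> carrier_mat n n"
    and "P * Q = 1\<^sub>m n" "Q * P = 1\<^sub>m n" and PAP: "transpose_mat P * A * P = B"
    by (rule isometricE[OF iso B])
  show ?thesis using bil_congruence[OF A P y y] P y unfolding PAP by auto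
qed

lemma isotropic_detects_anisotropic_if_isometric:
  fixes A B :: "'a::field mat"
  assumes iso: "isometric A B" and B: "B \<in> carrier_mat n n"
    and det: "isotropic_detects_anisotropic B n"
  shows "isotropic_detects_anisotropic A n"
  unfolding isotropic_detects_anisotropic_def
proof (intro ballI impI)
  fix y assume y: "y \<in> carrier_vec n" and qy: "bil A y y \<noteq> 0"
  obtain P Q where A: "A \<in> carrier_mat n n" and PQ: "P \<in> carrier_mat n n" "Q \<in> carrier_mat n n"
    "P * Q = 1\<^sub>m n" and "Q * P = 1\<^sub>m n" and PAP: "transpose_mat P * A * P = B"
    by (rule isometricE[OF iso B])
  have Py: "P *\<^sub>v (Q *\<^sub>v y) = y" by (rule mult_inverse_vec[OF PQ y])
  have Qy: "Q *\<^sub>v y \<in> carrier_vec n" using PQ y by simp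
  have "bil B (Q *\<^sub>v y) (Q *\<^sub>v y) \<noteq> 0"
    unfolding PAP[symmetric] bil_congruence[OF A PQ(1) Qy Qy] Py by (rule qy)
  then obtain x where x: "x \<in> carrier_vec n" "bil B x x = 0" "bil B x (Q *\<^sub>v y) \<noteq> 0"
    using det Qy unfolding isotropic_detects_anisotropic_def by auto
  show "\<exists>x\<in>carrier_vec n. bil A x x = 0 \<and> bil A x y \<noteq> 0"
    using x PQ(1) unfolding PAP[symmetric] bil_congruence[OF A PQ(1) x(1) x(1)]
      bil_congruence[OF A PQ(1) x(1) Qy] Py by auto
qed

section \<open>Bilinear Pfister forms\<close>

fun pfister_diag :: "'a::field list \<Rightarrow> nat \<Rightarrow> 'a" where
  "pfister_diag [] i = 1"
| "pfister_diag (a # as) i =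
     (if i div 2 ^ length as = 0 then 1 else a) * pfister_diag as (i mod 2 ^ length as)"

lemma dim_tensor_form [simp]:
  "dim_row (tensor_form A B) = dim_row A * dim_row B" "dim_col (tensor_form A B) = dim_col A * dim_col B"
  by (simp_all add: tensor_form_def)

lemma dim_pf1 [simp]: "dim_row (pf1 a) = 2" "dim_col (pf1 a) = 2"
  by (simp_all add: pf1_def)

lemma pfister_mat_carrier: "pfister_mat as \<in> carrier_mat (2 ^ length as) (2 ^ length as)"
proof -
  have "dim_row (pfister_mat as) = 2 ^ length as \<and> dim_col (pfister_mat as) = 2 ^ length as"
    by (induction as) simp_all
  thus ?thesis unfolding carrier_mat_def by simp
qed

lemma pfister_mat_entry:
  "i < 2 ^ length as \<Longrightarrow> j < 2 ^ length as \<Longrightarrow>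
    pfister_mat as $$ (i,j) = (if i = j then pfister_diag as i else 0)"
proof (induction as arbitrary: i j)
  case Nil
  then show ?case by simp
next
  case (Cons a as)
  let ?m = "2 ^ length as :: nat"
  have i2: "i < 2 * ?m" "j < 2 * ?m" using Cons.prems by simp_all
  have div: "i div ?m < 2" "j div ?m < 2"
    by (rule less_mult_imp_div_less[OF i2(1)], rule less_mult_imp_div_less[OF i2(2)])
  have mod: "i mod ?m < ?m" "j mod ?m < ?m" by simp_all
  have eq: "i = j \<longleftrightarrow> i div ?m = j div ?m \<and> i mod ?m = j mod ?m"
    by (metis div_mult_mod_eq[of i ?m] div_mult_mod_eq[of j ?m])
  have "pfister_mat (a # as) $$ (i,j) =
      pf1 a $$ (i div ?m, j div ?m) * pfister_mat as $$ (i mod ?m, j mod ?m)"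
    unfolding pfister_mat.simps(2)
    using Cons.prems pfister_mat_carrier[of as] by (simp add: tensor_form_def del: pfister_mat.simps)
  also have "\<dots> = (if i = j then pfister_diag (a # as) i else 0)"
  proof -
    have "pf1 a $$ (i div ?m, j div ?m) =
        (if i div ?m = j div ?m then (if i div ?m = 0 then 1 else a) else 0)"
      using div by (simp add: pf1_def)
    thus ?thesis unfolding Cons.IH[OF mod] eq pfister_diag.simps by simp
  qed
  finally show ?case .
qed

declare pfister_mat.simps [simp del]

lemma pfister_diag_nonzero:
  "(\<forall>a\<in>set as. a \<noteq> 0) \<Longrightarrow> pfister_diag as i \<noteq> 0"
  by (induction as arbitrary: i) auto

lemma pfister_mult_vec:
  assumes x: "x \<in> carrier_vec (2 ^ length as)" and k: "k < 2 ^ length as"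
  shows "(pfister_mat as *\<^sub>v x) $ k = pfister_diag as k * x $ k"
proof -
  have "(pfister_mat as *\<^sub>v x) $ k = (\<Sum>j\<in>{0..<2 ^ length as}. pfister_mat as $$ (k,j) * x $ j)"
    using pfister_mat_carrier[of as] k x by (simp add: scalar_prod_def)
  also have "\<dots> = (\<Sum>j\<in>{0..<2 ^ length as}. if j = k then pfister_diag as k * x $ k else 0)"
    by (rule sum.cong, insert k, auto simp: pfister_mat_entry)
  also have "\<dots> = pfister_diag as k * x $ k" using k by simp
  finally show ?thesis .
qed

lemma nondegenerate_pfister:
  assumes "\<forall>a\<in>set as. a \<noteq> 0"
  shows "nondegenerate (pfister_mat as) (2 ^ length as)"
  unfolding nondegenerate_def
proof (intro ballI impI)
  fix x assume x: "x \<in> carrier_vec (2 ^ length as)" and Px: "pfister_mat as *\<^sub>v x = 0\<^sub>v (2 ^ length as)"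
  show "x = 0\<^sub>v (2 ^ length as)"
  proof (rule eq_vecI)
    fix k assume "k < dim_vec (0\<^sub>v (2 ^ length as) :: 'a vec)"
    hence k: "k < 2 ^ length as" by simp
    have "pfister_diag as k * x $ k = 0" using pfister_mult_vec[OF x k] Px k by simp
    thus "x $ k = 0\<^sub>v (2 ^ length as) $ k" using pfister_diag_nonzero[OF assms] k by simp
  qed (insert x, simp)
qed

lemma pfister_diag_zero: "pfister_diag as 0 = 1"
  by (induction as) auto

lemma pfister_represents_one: "bil (pfister_mat as) (unit_vec (2 ^ length as) 0) (unit_vec (2 ^ length as) 0) = 1"
  using pfister_mat_carrier[of as] by (simp add: bil_def pfister_mat_entry pfister_diag_zero)

text \<open>Let \<open>r\<^sub>u\<close> run through the monomials in \<open>\<surd>a, \<surd>b, \<surd>c\<close>, so that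
  \<open>r\<^sub>u\<^sup>2 = pf3_diag a b c u\<close>. In characteristic 2 the quadratic form of \<open>\<langle>\<langle>a,b,c\<rangle>\<rangle>\<close> is
  \<open>x \<mapsto> (\<Sum>\<^sub>u x\<^sub>u r\<^sub>u)\<^sup>2\<close>, and \<open>pf3_mult x y\<close> is the coordinate vector of
  \<open>(\<Sum>\<^sub>u x\<^sub>u r\<^sub>u)(\<Sum>\<^sub>u y\<^sub>u r\<^sub>u)\<close>, computed with
  \<open>r\<^sub>v r\<^bsub>pf3_xor u v\<^esub> = pf3_diag a b c (pf3_coeff u v) \<cdot> r\<^sub>u\<close>. So the form is multiplicative.\<close>

definition pf3_diag :: "'a::field \<Rightarrow> 'a \<Rightarrow> 'a \<Rightarrow> nat \<Rightarrow> 'a" where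
  "pf3_diag a b c i = [1, c, b, b*c, a, a*c, a*b, a*b*c] ! i"

definition pf3_xor :: "nat \<Rightarrow> nat \<Rightarrow> nat" where
  "pf3_xor u v = [[0, 1, 2, 3, 4, 5, 6, 7], [1, 0, 3, 2, 5, 4, 7, 6], [2, 3, 0, 1, 6, 7, 4, 5],
    [3, 2, 1, 0, 7, 6, 5, 4], [4, 5, 6, 7, 0, 1, 2, 3], [5, 4, 7, 6, 1, 0, 3, 2],
    [6, 7, 4, 5, 2, 3, 0, 1], [7, 6, 5, 4, 3, 2, 1, 0]] ! u ! v"

definition pf3_coeff :: "nat \<Rightarrow> nat \<Rightarrow> nat" where
  "pf3_coeff u v = [[0, 1, 2, 3, 4, 5, 6, 7], [0, 0, 2, 2, 4, 4, 6, 6], [0, 1, 0, 1, 4, 5, 4, 5],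
    [0, 0, 0, 0, 4, 4, 4, 4], [0, 1, 2, 3, 0, 1, 2, 3], [0, 0, 2, 2, 0, 0, 2, 2],
    [0, 1, 0, 1, 0, 1, 0, 1], [0, 0, 0, 0, 0, 0, 0, 0]] ! u ! v"

definition pf3_mult :: "'a::field \<Rightarrow> 'a \<Rightarrow> 'a \<Rightarrow> 'a vec \<Rightarrow> 'a vec \<Rightarrow> 'a vec" where
  "pf3_mult a b c x y =
     vec 8 (\<lambda>u. \<Sum>v<8. pf3_diag a b c (pf3_coeff u v) * x $ v * y $ (pf3_xor u v))"

lemma pf3_mult_carrier [simp]: "pf3_mult a b c x y \<in> carrier_vec 8"
  unfolding pf3_mult_def by simp

lemma pf3_quadratic_mult:
  fixes a b c :: "'a::field"
  assumes char2: "(2::'a) = 0"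
  shows "(\<Sum>u<8. pf3_diag a b c u * (pf3_mult a b c x y $ u)^2) =
    (\<Sum>u<8. pf3_diag a b c u * (y $ u)^2) * (\<Sum>u<8. pf3_diag a b c u * (x $ u)^2)"
  unfolding pf3_mult_def sum_lessThan_8
  apply (simp add: pf3_diag_def pf3_xor_def pf3_coeff_def)
  apply (simp only: char2_power2_add[OF char2] power_mult_distrib)
  using char2 by (simp add: algebra_simps power2_eq_square)

lemma pf3_bil_mult:
  fixes a b c :: "'a::field"
  assumes char2: "(2::'a) = 0"
  shows "(\<Sum>u<8. pf3_diag a b c u * pf3_mult a b c x y $ u * y $ u) =
    (\<Sum>u<8. pf3_diag a b c u * (y $ u)^2) * x $ 0"
  unfolding pf3_mult_def sum_lessThan_8 using char2
  by (simp add: pf3_diag_def pf3_xor_def pf3_coeff_def power2_eq_square algebra_simps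
      char2_add_self char2_add_self_left)

lemma pfister3_diag: "i < 8 \<Longrightarrow> pfister_diag [a,b,c] i = pf3_diag a b c i"
  by (drule less_8_cases) (elim disjE, simp_all add: pf3_diag_def)

lemma pf3_diag_nonzero:
  "a \<noteq> 0 \<Longrightarrow> b \<noteq> 0 \<Longrightarrow> c \<noteq> 0 \<Longrightarrow> i < 8 \<Longrightarrow> pf3_diag a b c i \<noteq> (0::'a::field)"
  by (drule less_8_cases) (elim disjE, simp_all add: pf3_diag_def)

lemma pfister3_carrier: "pfister_mat [a,b,c] \<in> carrier_mat 8 8"
  using pfister_mat_carrier[of "[a,b,c]"] by simp

lemma bil_pfister3:
  fixes a b c :: "'a::field"
  assumes x: "x \<in> carrier_vec 8" and y: "y \<in> carrier_vec 8"
  shows "bil (pfister_mat [a,b,c]) x y = (\<Sum>u<8. pf3_diag a b c u * x $ u * y $ u)"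
proof -
  have N: "(2::nat) ^ length [a,b,c] = 8" by simp
  have "bil (pfister_mat [a,b,c]) x y = (\<Sum>u\<in>{0..<8}. x $ u * (pfister_mat [a,b,c] *\<^sub>v y) $ u)"
    unfolding bil_def scalar_prod_def using pfister3_carrier[of a b c] y by simp
  also have "\<dots> = (\<Sum>u\<in>{0..<8}. pf3_diag a b c u * x $ u * y $ u)"
    using pfister_mult_vec[of y "[a,b,c]", unfolded N] y
    by (intro sum.cong) (auto simp: pfister3_diag simp del: pfister_diag.simps)
  finally show ?thesis by (simp add: atLeast0LessThan)
qed

lemma isotropic_detects_anisotropic_pfister3:
  fixes a b c :: "'a::field"
  assumes char2: "(2::'a) = 0" and nonzero: "a \<noteq> 0" "b \<noteq> 0" "c \<noteq> 0"
    and iso: "isotropic (pfister_mat [a,b,c])"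
  shows "isotropic_detects_anisotropic (pfister_mat [a,b,c]) 8"
  unfolding isotropic_detects_anisotropic_def
proof (intro ballI impI)
  let ?P = "pfister_mat [a,b,c]" and ?q = "\<lambda>x. \<Sum>u<8. pf3_diag a b c u * (x $ u)^2"
  have q: "bil ?P x x = ?q x" if "x \<in> carrier_vec 8" for x
    unfolding bil_pfister3[OF that that] by (simp add: power2_eq_square mult.assoc)
  fix y :: "'a vec" assume y: "y \<in> carrier_vec 8" and qy: "bil ?P y y \<noteq> 0"
  obtain x0 where x0: "x0 \<in> carrier_vec 8" "x0 \<noteq> 0\<^sub>v 8" "?q x0 = 0"
    using iso pfister3_carrier[of a b c] q unfolding isotropic_def bil_def by auto
  obtain S where S: "S < 8" "x0 $ S \<noteq> 0"
    using x0(1,2) by (metis carrier_vecD eq_vecI index_zero_vec(1,2))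
  \<comment> \<open>Multiplying by a basis vector moves a nonzero coordinate of \<open>x0\<close> to position 0.\<close>
  define x1 where "x1 = pf3_mult a b c x0 (unit_vec 8 S)"
  have qx1: "?q x1 = 0" unfolding x1_def pf3_quadratic_mult[OF char2] x0(3) by simp
  have x1_0: "x1 $ 0 = pf3_diag a b c S * x0 $ S"
    unfolding x1_def pf3_mult_def using less_8_cases[OF S(1)]
    by (elim disjE) (simp_all add: sum_lessThan_8 pf3_xor_def pf3_coeff_def pf3_diag_def)
  hence "x1 $ 0 \<noteq> 0" using pf3_diag_nonzero[OF nonzero S(1)] S(2) by simp
  define z where "z = pf3_mult a b c x1 y"
  have "bil ?P z z = 0" unfolding q[OF pf3_mult_carrier] z_def pf3_quadratic_mult[OF char2] qx1 by simp
  moreover have "bil ?P z y = bil ?P y y * x1 $ 0"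
    unfolding bil_pfister3[OF pf3_mult_carrier y] z_def pf3_bil_mult[OF char2] q[OF y] ..
  ultimately show "\<exists>x\<in>carrier_vec 8. bil ?P x x = 0 \<and> bil ?P x y \<noteq> 0"
    using qy \<open>x1 $ 0 \<noteq> 0\<close> by (intro bexI[of _ z]) (auto simp: z_def)
qed

lemma is_bil_pfisterE:
  fixes T :: "'a::field mat"
  assumes T: "T \<in> carrier_mat n n" and pf: "is_bil_pfister T"
  obtains as where "\<forall>a\<in>set as. a \<noteq> 0" "isometric T (pfister_mat as)" "n = 2 ^ length as"
proof -
  obtain as where nz: "\<forall>a\<in>set as. a \<noteq> 0" and iso: "isometric T (pfister_mat as)"
    using pf unfolding is_bil_pfister_def by blast
  have "T \<in> carrier_mat (2 ^ length as) (2 ^ length as)"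
    by (rule isometricE[OF iso pfister_mat_carrier])
  hence "n = 2 ^ length as" using T by auto
  with nz iso that show ?thesis by blast
qed

lemma nondegenerate_bil_pfister:
  fixes T :: "'a::field mat"
  assumes T: "T \<in> carrier_mat n n" and pf: "is_bil_pfister T"
  shows "nondegenerate T n"
proof -
  obtain as where "\<forall>a\<in>set as. a \<noteq> 0" "isometric T (pfister_mat as)" "n = 2 ^ length as"
    using is_bil_pfisterE[OF T pf] .
  thus ?thesis using nondegenerate_if_isometric pfister_mat_carrier nondegenerate_pfister by metis
qed

lemma bil_pfister_represents_one:
  fixes T :: "'a::field mat"
  assumes T: "T \<in> carrier_mat n n" and pf: "is_bil_pfister T"
  obtains z where "z \<in> carrier_vec n" "bil T z z = 1"
proof -
  obtain as where "isometric T (pfister_mat as)" "n = 2 ^ length as"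
    using is_bil_pfisterE[OF T pf] by metis
  thus ?thesis using isometric_represents[OF _ pfister_mat_carrier unit_vec_carrier] pfister_represents_one that
    by metis
qed

lemma isotropic_detects_anisotropic_bil_pfister8:
  fixes T :: "'a::field mat"
  assumes char2: "(2::'a) = 0" and T: "T \<in> carrier_mat 8 8" and iso: "isotropic T"
    and pf: "is_bil_pfister T"
  shows "isotropic_detects_anisotropic T 8"
proof -
  obtain as where nz: "\<forall>a\<in>set as. a \<noteq> 0" and isom: "isometric T (pfister_mat as)"
    and "(8::nat) = 2 ^ length as"
    using is_bil_pfisterE[OF T pf] .
  hence "2 ^ length as = (2::nat) ^ 3" by simp
  hence "length as = 3" by (simp only: power_inject_exp)
  then obtain a b c where as: "as = [a, b, c]"
    by (metis (no_types) length_0_conv length_Suc_conv numeral_3_eq_3)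
  have P: "pfister_mat [a,b,c] \<in> carrier_mat 8 8" by (rule pfister3_carrier)
  have "isotropic (pfister_mat [a,b,c])" using isotropic_if_isometric[OF isom[unfolded as] P iso] .
  hence "isotropic_detects_anisotropic (pfister_mat [a,b,c]) 8"
    using isotropic_detects_anisotropic_pfister3[OF char2] nz as by simp
  thus ?thesis by (rule isotropic_detects_anisotropic_if_isometric[OF isom[unfolded as] P])
qed

section \<open>Four-dimensional forms in characteristic 2\<close>

lemma pfister2_carrier: "pfister_mat [x,y] \<in> carrier_mat 4 4"
  using pfister_mat_carrier[of "[x,y]"] by simp

lemma pfister2_entry:
  assumes "i < 4" "j < 4"
  shows "pfister_mat [x,y] $$ (i,j) = (if i = j then [1, y, x, x*y] ! i else 0)"
proof -
  have "pfister_diag [x,y] k = [1, y, x, x*y] ! k" if "k < 4" for k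
    using less_4_cases[OF that] by (elim disjE) simp_all
  thus ?thesis using pfister_mat_entry[of i "[x,y]" j] assms by (simp del: pfister_diag.simps)
qed

lemma similar_to_bil_pfister_of_orthogonal_basis:
  fixes A :: "'a::field mat"
  assumes A: "A \<in> carrier_mat 4 4" and sym: "transpose_mat A = A"
    and p: "ra \<in> carrier_vec 4" "rb \<in> carrier_vec 4" "rc \<in> carrier_vec 4" "rd \<in> carrier_vec 4"
    and o: "bil A ra rb = 0" "bil A ra rc = 0" "bil A ra rd = 0" "bil A rb rc = 0" "bil A rb rd = 0" "bil A rc rd = 0"
    and q: "bil A ra ra = c" "bil A rb rb = c * y" "bil A rc rc = c * x" "bil A rd rd = c * x * y"
    and nz: "c \<noteq> 0" "x \<noteq> 0" "y \<noteq> 0"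
  shows "similar_to_bil_pfister A"
proof -
  define P where "P = mat_of_cols 4 [ra, rb, rc, rd]"
  have P: "P \<in> carrier_mat 4 4" unfolding P_def carrier_mat_def by simp
  have o': "bil A rb ra = 0" "bil A rc ra = 0" "bil A rd ra = 0" "bil A rc rb = 0" "bil A rd rb = 0" "bil A rd rc = 0"
    using o bil_commute[OF A sym] p by metis+
  define T where "T = c \<cdot>\<^sub>m pfister_mat [x,y]"
  have T: "T \<in> carrier_mat 4 4" unfolding T_def using pfister2_carrier[of x y] by simp
  have Te: "T $$ (i,j) = (if i = j then c * [1, y, x, x*y] ! i else 0)" if "i < 4" "j < 4" for i j
    unfolding T_def using that pfister2_carrier[of x y] by (simp add: pfister2_entry)
  have PAP: "transpose_mat P * A * P = T"
  proof (rule eq_matI)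
    fix i j assume "i < dim_row T" and "j < dim_col T"
    hence i: "i < 4" and j: "j < 4" using T by auto
    have "(transpose_mat P * A * P) $$ (i,j) = bil A ([ra, rb, rc, rd] ! i) ([ra, rb, rc, rd] ! j)"
      unfolding P_def by (rule congruence_mat_of_cols_entry[OF A _ _ i j]) (use p in auto)
    thus "(transpose_mat P * A * P) $$ (i,j) = T $$ (i,j)"
      unfolding Te[OF i j] using less_4_cases[OF i] less_4_cases[OF j] o o' q
      by (elim disjE) (simp_all add: ac_simps)
  qed (insert P A T, auto)
  define Di where "Di = mat 4 4 (\<lambda>(i,j). if i = j then 1 / (c * [1, y, x, x*y] ! i) else (0::'a))"
  have Di: "Di \<in> carrier_mat 4 4" unfolding Di_def by simp
  have DiT: "Di * T = 1\<^sub>m 4"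
  proof (rule eq_matI)
    fix i j assume "i < dim_row (1\<^sub>m 4 :: 'a mat)" and "j < dim_col (1\<^sub>m 4 :: 'a mat)"
    hence i: "i < 4" and j: "j < 4" by auto
    have "(Di * T) $$ (i,j) = (\<Sum>k<4. Di $$ (i,k) * T $$ (k,j))"
      using Di T i j by (simp add: scalar_prod_def atLeast0LessThan)
    also have "\<dots> = 1\<^sub>m 4 $$ (i,j)"
      unfolding sum_lessThan_4 using less_4_cases[OF i] less_4_cases[OF j] nz
      by (elim disjE) (simp_all add: Te Di_def)
    finally show "(Di * T) $$ (i,j) = 1\<^sub>m 4 $$ (i,j)" .
  qed (insert Di T, auto)
  have "isometric A T" using isometric_congruenceI[OF A P Di] DiT unfolding PAP by simp
  thus ?thesis unfolding similar_to_bil_pfister_def T_def using nz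
    by (intro exI[of _ c] exI[of _ "[x,y]"]) auto
qed

definition hyperbolic_plus_diag :: "'a::field \<Rightarrow> 'a \<Rightarrow> 'a \<Rightarrow> 'a mat" where
  "hyperbolic_plus_diag c d e = mat 4 4 (\<lambda>(i,j). [[0,1,0,0],[1,c,0,0],[0,0,d,0],[0,0,0,e]] ! i ! j)"

lemma hyperbolic_plus_diag_carrier: "hyperbolic_plus_diag c d e \<in> carrier_mat 4 4"
  unfolding hyperbolic_plus_diag_def by simp

lemma bil_hyperbolic_plus_diag:
  assumes x: "x \<in> carrier_vec 4" and y: "y \<in> carrier_vec 4"
  shows "bil (hyperbolic_plus_diag c d e) x y =
    x$0 * y$1 + x$1 * y$0 + c * x$1 * y$1 + d * x$2 * y$2 + e * x$3 * y$3"
  unfolding bil_def scalar_prod_def using x y hyperbolic_plus_diag_carrier[of c d e]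
  by (simp add: atLeast0LessThan sum_lessThan_4 hyperbolic_plus_diag_def scalar_prod_def algebra_simps)

lemma hyperbolic_plus_anisotropic_not_detected:
  fixes c d e :: "'a::field"
  assumes char2: "(2::'a) = 0" and d: "d \<noteq> 0" and e: "e \<noteq> 0"
    and aniso: "\<And>X Y. d * X^2 + e * Y^2 = 0 \<Longrightarrow> X = 0"
  shows "\<not> isotropic_detects_anisotropic (hyperbolic_plus_diag c d e) 4"
proof
  let ?G = "hyperbolic_plus_diag c d e"
  assume det: "isotropic_detects_anisotropic ?G 4"
  have witness: "\<exists>x\<in>carrier_vec 4. bil ?G x x = 0 \<and> bil ?G x y \<noteq> 0"
    if "y \<in> carrier_vec 4" "bil ?G y y = d" for y
    using det that d unfolding isotropic_detects_anisotropic_def by auto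
  \<comment> \<open>The vector detecting \<open>y\<close> must have a nonzero entry in the \<open>d\<close>-slot, which the
    anisotropy of \<open>\<langle>d,e\<rangle>\<close> forbids.\<close>
  show False
  proof (cases "\<exists>p q. c = p^2 * d + q^2 * e")
    case True
    then obtain p q where pq: "c = p^2 * d + q^2 * e" by auto
    define y :: "'a vec" where "y = vec 4 (\<lambda>i. [p*d, 0, 1, 0] ! i)"
    have y: "y \<in> carrier_vec 4" unfolding y_def by simp
    obtain x where x: "x \<in> carrier_vec 4" "bil ?G x x = 0" "bil ?G x y \<noteq> 0"
      using witness[OF y] unfolding bil_hyperbolic_plus_diag[OF y y] by (auto simp: y_def)
    have "d * (p * x$1 + x$2)^2 + e * (q * x$1 + x$3)^2 = bil ?G x x"
      unfolding bil_hyperbolic_plus_diag[OF x(1) x(1)] pq using char2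
      by (simp add: power2_eq_square algebra_simps)
    hence "p * x$1 + x$2 = 0" using x(2) aniso by simp
    moreover have "bil ?G x y = d * (p * x$1 + x$2)"
      unfolding bil_hyperbolic_plus_diag[OF x(1) y] by (simp add: y_def algebra_simps)
    ultimately show False using x(3) by simp
  next
    case False
    define y :: "'a vec" where "y = vec 4 (\<lambda>i. [0, 0, 1, 0] ! i)"
    have y: "y \<in> carrier_vec 4" unfolding y_def by simp
    obtain x where x: "x \<in> carrier_vec 4" "bil ?G x x = 0" "bil ?G x y \<noteq> 0"
      using witness[OF y] unfolding bil_hyperbolic_plus_diag[OF y y] by (auto simp: y_def)
    have q: "c * (x$1)^2 + (d * (x$2)^2 + e * (x$3)^2) = 0"
      using x(2) char2 unfolding bil_hyperbolic_plus_diag[OF x(1) x(1)]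
      by (simp add: power2_eq_square algebra_simps)
    have "x$1 = 0"
    proof (rule ccontr)
      assume nz: "x$1 \<noteq> 0"
      have "c * (x$1)^2 = d * (x$2)^2 + e * (x$3)^2" using char2_eq_if_add_eq_0[OF char2 q] .
      hence "c = (x$2/x$1)^2 * d + (x$3/x$1)^2 * e" using nz by (simp add: field_simps)
      thus False using False by blast
    qed
    hence "x$2 = 0" using q aniso by simp
    moreover have "bil ?G x y = d * x$2"
      unfolding bil_hyperbolic_plus_diag[OF x(1) y] by (simp add: y_def)
    ultimately show False using x(3) by simp
  qed
qed

lemma nondegenerate_pairs_nonzero:
  fixes A :: "'a::field mat"
  assumes A: "A \<in> carrier_mat n n" and sym: "transpose_mat A = A" and nd: "nondegenerate A n"
    and v: "v \<in> carrier_vec n" "v \<noteq> 0\<^sub>v n"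
  obtains u where "u \<in> carrier_vec n" "bil A v u \<noteq> 0"
proof -
  have "\<exists>k<n. bil A (unit_vec n k) v \<noteq> 0"
    using mult_mat_vec_eq_zeroI[OF A v(1)] nd v unfolding nondegenerate_def by blast
  then obtain k where "k < n" "bil A (unit_vec n k) v \<noteq> 0" by blast
  thus ?thesis using that[of "unit_vec n k"] bil_commute[OF A sym unit_vec_carrier v(1)] by simp
qed

lemma hyperbolic_partner:
  fixes A :: "'a::field mat"
  assumes char2: "(2::'a) = 0" and A: "A \<in> carrier_mat n n" and sym: "transpose_mat A = A"
    and nd: "nondegenerate A n"
    and v: "v \<in> carrier_vec n" "v \<noteq> 0\<^sub>v n" "bil A v v = 0"
    and z: "z \<in> carrier_vec n" "bil A z z \<noteq> 0"
  obtains w where "w \<in> carrier_vec n" "bil A v w = 1" "bil A w w \<noteq> 0"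
proof -
  note bil_linear = bil_add_left[OF A] bil_add_right[OF A] bil_smult_left[OF A] bil_smult_right[OF A]
  obtain u where u: "u \<in> carrier_vec n" "bil A v u \<noteq> 0"
    using nondegenerate_pairs_nonzero[OF A sym nd v(1,2)] .
  define w0 where "w0 = (1 / bil A v u) \<cdot>\<^sub>v u"
  have w0: "w0 \<in> carrier_vec n" "bil A v w0 = 1" using u v unfolding w0_def by (auto simp: bil_linear)
  consider "bil A v z \<noteq> 0" | "bil A v z = 0" "bil A w0 w0 \<noteq> 0" | "bil A v z = 0" "bil A w0 w0 = 0"
    by blast
  thus ?thesis
  proof cases
    case 1
    thus ?thesis using that[of "(1 / bil A v z) \<cdot>\<^sub>v z"] z v by (auto simp: bil_linear)
  next
    case 2
    thus ?thesis using that w0 by blast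
  next
    case 3
    \<comment> \<open>In characteristic 2 the cross terms cancel, so \<open>w0 + z\<close> has the anisotropy of \<open>z\<close>.\<close>
    have "bil A (w0 + z) (w0 + z) = bil A w0 w0 + (bil A w0 z + bil A w0 z) + bil A z z"
      using w0 z bil_commute[OF A sym z(1) w0(1)] by (simp add: bil_linear algebra_simps)
    hence q: "bil A (w0 + z) (w0 + z) = bil A z z" using 3 char2_add_self[OF char2] by simp
    show ?thesis
    proof (rule that[of "w0 + z"])
      show "w0 + z \<in> carrier_vec n" using w0 z by simp
      show "bil A v (w0 + z) = 1" using w0 z v 3 by (simp add: bil_linear)
      show "bil A (w0 + z) (w0 + z) \<noteq> 0" unfolding q by (rule z(2))
    qed
  qed
qed

lemma unit_vecs_not_in_span3:
  fixes p q r :: "'a::field vec"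
  assumes pqr: "p \<in> carrier_vec 4" "q \<in> carrier_vec 4" "r \<in> carrier_vec 4"
    and span: "\<And>l. l < 4 \<Longrightarrow> \<exists>\<alpha> \<beta> \<gamma>. unit_vec 4 l = \<alpha> \<cdot>\<^sub>v p + \<beta> \<cdot>\<^sub>v q + \<gamma> \<cdot>\<^sub>v r"
  shows False
proof -
  obtain f g h where fgh: "\<And>l. l < 4 \<Longrightarrow> unit_vec 4 l = f l \<cdot>\<^sub>v p + g l \<cdot>\<^sub>v q + h l \<cdot>\<^sub>v r"
    using span by metis
  define M where "M = mat_of_cols 4 [p, q, r, 0\<^sub>v 4]"
  define C where "C = mat 4 4 (\<lambda>(i,l). [f l, g l, h l, 0] ! i)"
  have M: "M \<in> carrier_mat 4 4" unfolding M_def carrier_mat_def mat_of_cols_def by simp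
  have C: "C \<in> carrier_mat 4 4" unfolding C_def by simp
  have MC: "M * C = 1\<^sub>m 4"
  proof (rule eq_matI)
    fix i l assume "i < dim_row (1\<^sub>m 4 :: 'a mat)" and "l < dim_col (1\<^sub>m 4 :: 'a mat)"
    hence i: "i < 4" and l: "l < 4" by auto
    have e: "unit_vec 4 l $ i = f l * p $ i + g l * q $ i + h l * r $ i"
      using fgh[OF l] i pqr by simp
    have "(M * C) $$ (i,l) = (\<Sum>j<4. M $$ (i,j) * C $$ (j,l))"
      using M C i l by (simp add: scalar_prod_def atLeast0LessThan)
    also have "\<dots> = p $ i * f l + q $ i * g l + r $ i * h l"
      using i l by (simp add: sum_lessThan_4 M_def C_def mat_of_cols_def)
    also have "\<dots> = 1\<^sub>m 4 $$ (i,l)" using e i l by (simp add: ac_simps)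
    finally show "(M * C) $$ (i,l) = 1\<^sub>m 4 $$ (i,l)" .
  qed (insert M C, auto)
  \<comment> \<open>The last column of \<open>M\<close> vanishes, so \<open>C * M = 1\<close> is impossible.\<close>
  have "(C * M) $$ (3,3) = row C 3 \<bullet> col M 3" using C M by simp
  also have "col M 3 = 0\<^sub>v 4" unfolding M_def by (subst col_mat_of_cols, auto)
  also have "row C 3 \<bullet> 0\<^sub>v 4 = 0" unfolding scalar_prod_def by simp
  finally have "(C * M) $$ (3,3) = 0" .
  thus False unfolding mat_mult_left_right_inverse[OF M C MC] by simp
qed

lemma nondegenerate_no_orthogonal_translates:
  fixes A :: "'a::field mat"
  assumes char2: "(2::'a) = 0" and A: "A \<in> carrier_mat 4 4" and sym: "transpose_mat A = A"
    and nd: "nondegenerate A 4"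
    and pqr: "p \<in> carrier_vec 4" "q \<in> carrier_vec 4" "r \<in> carrier_vec 4"
    and f: "\<And>l. l < 4 \<Longrightarrow> f l = unit_vec 4 l + \<alpha> l \<cdot>\<^sub>v p + \<beta> l \<cdot>\<^sub>v q + \<gamma> l \<cdot>\<^sub>v r"
    and orth: "\<And>l. l < 4 \<Longrightarrow> bil A (f l) p = 0" "\<And>l. l < 4 \<Longrightarrow> bil A (f l) q = 0"
      "\<And>l. l < 4 \<Longrightarrow> bil A (f l) r = 0"
    and mutually_orth: "\<And>l m. l < 4 \<Longrightarrow> m < 4 \<Longrightarrow> bil A (f l) (f m) = 0"
  shows False
proof (rule unit_vecs_not_in_span3[OF pqr])
  fix l :: nat assume l: "l < 4"
  have fc: "f l \<in> carrier_vec 4" using f[OF l] pqr by simp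
  \<comment> \<open>\<open>f l\<close> is orthogonal to every \<open>f m\<close> and to \<open>p, q, r\<close>, hence to all of \<open>F\<^sup>4\<close>.\<close>
  have "A *\<^sub>v f l = 0\<^sub>v 4"
  proof (rule mult_mat_vec_eq_zeroI[OF A fc])
    fix m :: nat assume m: "m < 4"
    have "bil A (unit_vec 4 m) (f l) = bil A (f l) (unit_vec 4 m)"
      by (rule bil_commute[OF A sym unit_vec_carrier fc])
    also have "\<dots> = bil A (f l) (f m)" using f[OF m] orth[OF l] pqr fc
      by (simp add: bil_add_right[OF A] bil_smult_right[OF A])
    finally show "bil A (unit_vec 4 m) (f l) = 0" using mutually_orth[OF l m] by simp
  qed
  hence f0: "f l = 0\<^sub>v 4" using nd fc unfolding nondegenerate_def by blast
  have "unit_vec 4 l = \<alpha> l \<cdot>\<^sub>v p + \<beta> l \<cdot>\<^sub>v q + \<gamma> l \<cdot>\<^sub>v r"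
  proof (rule eq_vecI)
    fix i assume "i < dim_vec (\<alpha> l \<cdot>\<^sub>v p + \<beta> l \<cdot>\<^sub>v q + \<gamma> l \<cdot>\<^sub>v r)"
    hence i: "i < 4" using pqr by simp
    have "unit_vec 4 l $ i + (\<alpha> l * p $ i + \<beta> l * q $ i + \<gamma> l * r $ i) = 0"
      using arg_cong[OF f[OF l], of "\<lambda>x. x $ i"] f0 i pqr by (simp add: add.assoc)
    hence "unit_vec 4 l $ i = \<alpha> l * p $ i + \<beta> l * q $ i + \<gamma> l * r $ i"
      by (rule char2_eq_if_add_eq_0[OF char2])
    thus "unit_vec 4 l $ i = (\<alpha> l \<cdot>\<^sub>v p + \<beta> l \<cdot>\<^sub>v q + \<gamma> l \<cdot>\<^sub>v r) $ i"
      using i pqr by simp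
  qed (insert pqr, simp)
  thus "\<exists>a b c. unit_vec 4 l = a \<cdot>\<^sub>v p + b \<cdot>\<^sub>v q + c \<cdot>\<^sub>v r" by blast
qed

locale hyperbolic_pair4 =
  fixes A :: "'a::field mat" and v w :: "'a vec"
  assumes char2: "(2::'a) = 0" and A: "A \<in> carrier_mat 4 4" and sym: "transpose_mat A = A"
    and v: "v \<in> carrier_vec 4" and w: "w \<in> carrier_vec 4"
    and isotropic_v: "bil A v v = 0" and bil_v_w: "bil A v w = 1" and anisotropic_w: "bil A w w \<noteq> 0"
begin

lemmas bil_linear = bil_add_left[OF A] bil_add_right[OF A] bil_smult_left[OF A] bil_smult_right[OF A]

lemma bil_comm: "x \<in> carrier_vec 4 \<Longrightarrow> y \<in> carrier_vec 4 \<Longrightarrow> bil A x y = bil A y x"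
  by (rule bil_commute[OF A sym])

lemma bil_w_v: "bil A w v = 1"
  using bil_comm[OF w v] bil_v_w by simp

definition perp :: "'a vec \<Rightarrow> bool" where
  "perp u \<longleftrightarrow> u \<in> carrier_vec 4 \<and> bil A u v = 0 \<and> bil A u w = 0"

definition hyperbolic_in_perp :: bool where
  "hyperbolic_in_perp \<longleftrightarrow>
     (\<exists>u u'. perp u \<and> perp u' \<and> bil A u u = 0 \<and> bil A u' u' = 0 \<and> bil A u u' \<noteq> 0)"

lemma similar_if_hyperbolic_in_perp:
  assumes "hyperbolic_in_perp"
  shows "similar_to_bil_pfister A"
proof -
  obtain u u' where u: "perp u" "perp u'" "bil A u u = 0" "bil A u' u' = 0" "bil A u u' \<noteq> 0"
    using assms unfolding hyperbolic_in_perp_def by blast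
  define c where "c = bil A w w"
  define u2 where "u2 = (1 / bil A u u') \<cdot>\<^sub>v u'"
  have uc: "u \<in> carrier_vec 4" "u2 \<in> carrier_vec 4" "u' \<in> carrier_vec 4"
    using u unfolding perp_def u2_def by auto
  have f: "bil A u v = 0" "bil A u w = 0" "bil A u2 v = 0" "bil A u2 w = 0" "bil A u u2 = 1"
    using u uc v w unfolding perp_def u2_def by (auto simp: bil_linear)
  have f': "bil A v u = 0" "bil A w u = 0" "bil A v u2 = 0" "bil A w u2 = 0" "bil A u2 u = 1"
    using f bil_comm[OF v uc(1)] bil_comm[OF w uc(1)] bil_comm[OF v uc(2)] bil_comm[OF w uc(2)] bil_comm[OF uc(2) uc(1)]
    by auto
  have q2: "bil A u2 u2 = 0" using u uc unfolding u2_def by (auto simp: bil_linear)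
  note facts = f f' q2 u(3) isotropic_v bil_v_w bil_w_v c_def[symmetric]
  \<comment> \<open>An orthogonal basis on which the form is \<open>c\<langle>1,1,1,1\<rangle> = c\<langle>\<langle>1,1\<rangle>\<rangle>\<close>.\<close>
  show ?thesis
    by (rule similar_to_bil_pfister_of_orthogonal_basis[where ra="w + c \<cdot>\<^sub>v u + u2" and rb="w + u2"
          and rc="w + c \<cdot>\<^sub>v u" and rd="w + c \<cdot>\<^sub>v v" and c=c and x=1 and y=1, OF A sym],
        insert uc v w anisotropic_w, auto simp: bil_linear facts char2_add_self[OF char2]
          char2_add_self_left[OF char2] algebra_simps)
qed

lemma similar_if_perp_isotropic_diag:
  assumes u: "perp u1" "perp u2" "bil A u1 u2 = 0" "bil A u1 u1 \<noteq> 0" "bil A u2 u2 \<noteq> 0"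
    and XY: "bil A u1 u1 * X^2 + bil A u2 u2 * Y^2 = 0" "X \<noteq> 0"
  shows "similar_to_bil_pfister A"
proof -
  define c where "c = bil A w w"
  define d where "d = bil A u1 u1"
  define e where "e = bil A u2 u2"
  have uc: "u1 \<in> carrier_vec 4" "u2 \<in> carrier_vec 4" using u unfolding perp_def by auto
  have f: "bil A u1 v = 0" "bil A u1 w = 0" "bil A u2 v = 0" "bil A u2 w = 0" "bil A u1 u2 = 0"
    "bil A u1 u1 = d" "bil A u2 u2 = e"
    using u unfolding perp_def d_def e_def by auto
  have f': "bil A v u1 = 0" "bil A w u1 = 0" "bil A v u2 = 0" "bil A w u2 = 0" "bil A u2 u1 = 0"
    using f bil_comm[OF v uc(1)] bil_comm[OF w uc(1)] bil_comm[OF v uc(2)] bil_comm[OF w uc(2)] bil_comm[OF uc(2) uc(1)]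
    by auto
  define t where "t = Y / X"
  have "d * X^2 = e * Y^2" using char2_eq_if_add_eq_0[OF char2 XY(1)] unfolding d_def e_def .
  hence et: "t * (t * e) = d" using XY(2) unfolding t_def by (simp add: field_simps power2_eq_square)
  note facts = f f' isotropic_v bil_v_w bil_w_v c_def[symmetric]
  \<comment> \<open>An orthogonal basis on which the form is \<open>c\<langle>1,1,d/c,d/c\<rangle> = c\<langle>\<langle>d/c,1\<rangle>\<rangle>\<close>.\<close>
  show ?thesis
    by (rule similar_to_bil_pfister_of_orthogonal_basis[where ra=w and rb="w + c \<cdot>\<^sub>v v" and rc=u1
          and rd="t \<cdot>\<^sub>v u2" and c=c and x="d / c" and y=1, OF A sym],
        insert uc v w anisotropic_w u(4) et, auto simp: bil_linear facts d_def[symmetric]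
          char2_add_self[OF char2] char2_add_self_left[OF char2] algebra_simps)
qed

lemma perp_anisotropic_diag_not_detected:
  assumes u: "perp u1" "perp u2" "bil A u1 u2 = 0" "bil A u1 u1 \<noteq> 0" "bil A u2 u2 \<noteq> 0"
    and aniso: "\<And>X Y. bil A u1 u1 * X^2 + bil A u2 u2 * Y^2 = 0 \<Longrightarrow> X = 0"
  shows "\<not> isotropic_detects_anisotropic A 4"
proof
  assume det: "isotropic_detects_anisotropic A 4"
  define c where "c = bil A w w"
  define d where "d = bil A u1 u1"
  define e where "e = bil A u2 u2"
  have de: "d \<noteq> 0" "e \<noteq> 0" using u d_def e_def by auto
  have uc: "u1 \<in> carrier_vec 4" "u2 \<in> carrier_vec 4" using u unfolding perp_def by auto
  have f: "bil A u1 v = 0" "bil A u1 w = 0" "bil A u2 v = 0" "bil A u2 w = 0" "bil A u1 u2 = 0"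
    "bil A u1 u1 = d" "bil A u2 u2 = e"
    using u unfolding perp_def d_def e_def by auto
  have f': "bil A v u1 = 0" "bil A w u1 = 0" "bil A v u2 = 0" "bil A w u2 = 0" "bil A u2 u1 = 0"
    using f bil_comm[OF v uc(1)] bil_comm[OF w uc(1)] bil_comm[OF v uc(2)] bil_comm[OF w uc(2)] bil_comm[OF uc(2) uc(1)]
    by auto
  let ?G = "hyperbolic_plus_diag c d e"
  define N where "N = mat_of_cols 4 [v, w, u1, u2]"
  have N: "N \<in> carrier_mat 4 4" unfolding N_def carrier_mat_def by simp
  have NAN: "transpose_mat N * A * N = ?G"
  proof (rule eq_matI)
    fix i j assume "i < dim_row ?G" and "j < dim_col ?G"
    hence i: "i < 4" and j: "j < 4" using hyperbolic_plus_diag_carrier[of c d e] by auto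
    have "(transpose_mat N * A * N) $$ (i,j) = bil A ([v, w, u1, u2] ! i) ([v, w, u1, u2] ! j)"
      unfolding N_def by (rule congruence_mat_of_cols_entry[OF A _ _ i j]) (use uc v w in auto)
    thus "(transpose_mat N * A * N) $$ (i,j) = ?G $$ (i,j)"
      using less_4_cases[OF i] less_4_cases[OF j]
      by (elim disjE) (simp_all add: hyperbolic_plus_diag_def f f' isotropic_v bil_v_w bil_w_v c_def)
  qed (insert N A hyperbolic_plus_diag_carrier[of c d e], auto)
  define Gi where "Gi = mat 4 4 (\<lambda>(i,j). [[c,1,0,0],[1,0,0,0],[0,0,1/d,0],[0,0,0,1/e]] ! i ! j)"
  have Gi: "Gi \<in> carrier_mat 4 4" unfolding Gi_def by simp
  have GiG: "Gi * ?G = 1\<^sub>m 4"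
  proof (rule eq_matI)
    fix i j assume "i < dim_row (1\<^sub>m 4 :: 'a mat)" and "j < dim_col (1\<^sub>m 4 :: 'a mat)"
    hence i: "i < 4" and j: "j < 4" by auto
    have "(Gi * ?G) $$ (i,j) = (\<Sum>k<4. Gi $$ (i,k) * ?G $$ (k,j))"
      using Gi hyperbolic_plus_diag_carrier[of c d e] i j by (simp add: scalar_prod_def atLeast0LessThan)
    also have "\<dots> = 1\<^sub>m 4 $$ (i,j)"
      unfolding sum_lessThan_4 using less_4_cases[OF i] less_4_cases[OF j] de char2_add_self[OF char2]
      by (elim disjE) (simp_all add: Gi_def hyperbolic_plus_diag_def)
    finally show "(Gi * ?G) $$ (i,j) = 1\<^sub>m 4 $$ (i,j)" .
  qed (insert Gi hyperbolic_plus_diag_carrier[of c d e], auto)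
  have "isometric A ?G" using isometric_congruenceI[OF A N Gi] GiG unfolding NAN by simp
  hence "isotropic_detects_anisotropic ?G 4"
    using isotropic_detects_anisotropic_if_isometric[OF isometric_sym A det] by blast
  moreover have "\<And>X Y. d * X^2 + e * Y^2 = 0 \<Longrightarrow> X = 0" using aniso unfolding d_def e_def .
  ultimately show False using hyperbolic_plus_anisotropic_not_detected[OF char2 de] by blast
qed

definition proj :: "'a vec \<Rightarrow> 'a vec" where
  "proj x = x + (bil A x w + bil A w w * bil A x v) \<cdot>\<^sub>v v + bil A x v \<cdot>\<^sub>v w"

lemma perp_proj: "x \<in> carrier_vec 4 \<Longrightarrow> perp (proj x)"
  unfolding perp_def proj_def using v w
  by (simp add: bil_linear isotropic_v bil_v_w bil_w_v char2_add_self[OF char2] char2_add_self_left[OF char2]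
      algebra_simps)

lemma perp_anisotropic_or_hyperbolic:
  assumes nd: "nondegenerate A 4"
  shows "(\<exists>u. perp u \<and> bil A u u \<noteq> 0) \<or> hyperbolic_in_perp"
proof -
  let ?f = "\<lambda>l. proj (unit_vec 4 l)"
  have perp_f: "perp (?f l)" for l by (rule perp_proj) simp
  consider k where "k < 4" "bil A (?f k) (?f k) \<noteq> 0"
    | l m where "l < 4" "m < 4" "bil A (?f l) (?f m) \<noteq> 0" "\<forall>k<4. bil A (?f k) (?f k) = 0"
    | "\<forall>l<4. \<forall>m<4. bil A (?f l) (?f m) = 0"
    by blast
  thus ?thesis
  proof cases
    case 1
    thus ?thesis using perp_f by blast
  next
    case 2
    thus ?thesis unfolding hyperbolic_in_perp_def using perp_f by blast
  next
    case 3
    \<comment> \<open>Then the translates \<open>?f l\<close> of the basis vectors would lie in the radical.\<close>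
    have False
    proof (rule nondegenerate_no_orthogonal_translates[OF char2 A sym nd v w v, where f="?f"
          and \<alpha>="\<lambda>l. bil A (unit_vec 4 l) w + bil A w w * bil A (unit_vec 4 l) v"
          and \<beta>="\<lambda>l. bil A (unit_vec 4 l) v" and \<gamma>="\<lambda>l. 0"])
      fix l :: nat assume "l < 4"
      show "?f l = unit_vec 4 l + (bil A (unit_vec 4 l) w + bil A w w * bil A (unit_vec 4 l) v) \<cdot>\<^sub>v v
          + bil A (unit_vec 4 l) v \<cdot>\<^sub>v w + 0 \<cdot>\<^sub>v v"
        unfolding proj_def by (rule eq_vecI) (use v w in auto)
      show "bil A (?f l) v = 0" "bil A (?f l) w = 0" "bil A (?f l) v = 0"
        using perp_f unfolding perp_def by auto
    next
      fix l m :: nat assume "l < 4" "m < 4"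
      thus "bil A (?f l) (?f m) = 0" using 3 by auto
    qed
    thus ?thesis ..
  qed
qed

lemma perp_orthogonal_or_hyperbolic:
  assumes nd: "nondegenerate A 4" and u1: "perp u1" "bil A u1 u1 \<noteq> 0"
  shows "(\<exists>u2. perp u2 \<and> bil A u2 u2 \<noteq> 0 \<and> bil A u1 u2 = 0) \<or> hyperbolic_in_perp"
proof -
  have u1c: "u1 \<in> carrier_vec 4" using u1 unfolding perp_def by simp
  define g where "g x = (bil A (proj x) u1 / bil A u1 u1)" for x
  let ?f = "\<lambda>l. proj (unit_vec 4 l) + g (unit_vec 4 l) \<cdot>\<^sub>v u1"
  have perp_f: "perp (?f l) \<and> bil A (?f l) u1 = 0" for l
  proof -
    have "perp (proj (unit_vec 4 l))" by (rule perp_proj) simp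
    thus ?thesis using u1 u1c v w unfolding perp_def g_def by (simp add: bil_linear char2_add_self[OF char2])
  qed
  consider k where "k < 4" "bil A (?f k) (?f k) \<noteq> 0"
    | l m where "l < 4" "m < 4" "bil A (?f l) (?f m) \<noteq> 0" "\<forall>k<4. bil A (?f k) (?f k) = 0"
    | "\<forall>l<4. \<forall>m<4. bil A (?f l) (?f m) = 0"
    by blast
  thus ?thesis
  proof cases
    case 1
    thus ?thesis using perp_f bil_comm[OF u1c, of "?f k"] unfolding perp_def by metis
  next
    case 2
    thus ?thesis unfolding hyperbolic_in_perp_def using perp_f by blast
  next
    case 3
    have False
    proof (rule nondegenerate_no_orthogonal_translates[OF char2 A sym nd v w u1c, where f="?f"
          and \<alpha>="\<lambda>l. bil A (unit_vec 4 l) w + bil A w w * bil A (unit_vec 4 l) v"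
          and \<beta>="\<lambda>l. bil A (unit_vec 4 l) v" and \<gamma>="\<lambda>l. g (unit_vec 4 l)"])
      fix l :: nat assume "l < 4"
      show "?f l = unit_vec 4 l + (bil A (unit_vec 4 l) w + bil A w w * bil A (unit_vec 4 l) v) \<cdot>\<^sub>v v
          + bil A (unit_vec 4 l) v \<cdot>\<^sub>v w + g (unit_vec 4 l) \<cdot>\<^sub>v u1"
        unfolding proj_def ..
      show "bil A (?f l) v = 0" "bil A (?f l) w = 0" "bil A (?f l) u1 = 0"
        using perp_f unfolding perp_def by auto
    next
      fix l m :: nat assume "l < 4" "m < 4"
      thus "bil A (?f l) (?f m) = 0" using 3 by auto
    qed
    thus ?thesis ..
  qed
qed

theorem similar_to_bil_pfister_if_detected:
  assumes nd: "nondegenerate A 4" and det: "isotropic_detects_anisotropic A 4"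
  shows "similar_to_bil_pfister A"
  using perp_anisotropic_or_hyperbolic[OF nd]
proof
  assume "\<exists>u. perp u \<and> bil A u u \<noteq> 0"
  then obtain u1 where u1: "perp u1" "bil A u1 u1 \<noteq> 0" by blast
  from perp_orthogonal_or_hyperbolic[OF nd u1] show ?thesis
  proof
    assume "\<exists>u2. perp u2 \<and> bil A u2 u2 \<noteq> 0 \<and> bil A u1 u2 = 0"
    then obtain u2 where u2: "perp u2" "bil A u2 u2 \<noteq> 0" "bil A u1 u2 = 0" by blast
    show ?thesis
    proof (cases "\<exists>X Y. bil A u1 u1 * X^2 + bil A u2 u2 * Y^2 = 0 \<and> X \<noteq> 0")
      case True
      then obtain X Y where "bil A u1 u1 * X^2 + bil A u2 u2 * Y^2 = 0" "X \<noteq> 0" by blast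
      thus ?thesis by (rule similar_if_perp_isotropic_diag[OF u1(1) u2(1) u2(3) u1(2) u2(2)])
    next
      case False
      hence "\<not> isotropic_detects_anisotropic A 4"
        by (intro perp_anisotropic_diag_not_detected[OF u1(1) u2(1) u2(3) u1(2) u2(2)]) blast
      thus ?thesis using det by contradiction
    qed
  qed (rule similar_if_hyperbolic_in_perp)
qed (rule similar_if_hyperbolic_in_perp)

end

lemma similar_to_bil_pfister_dim4:
  fixes A :: "'a::field mat"
  assumes char2: "(2::'a) = 0" and A: "A \<in> carrier_mat 4 4" and sym: "transpose_mat A = A"
    and nd: "nondegenerate A 4" and iso: "isotropic A"
    and z: "z \<in> carrier_vec 4" "bil A z z \<noteq> 0"
    and det: "isotropic_detects_anisotropic A 4"
  shows "similar_to_bil_pfister A"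
proof -
  obtain v where v: "v \<in> carrier_vec 4" "v \<noteq> 0\<^sub>v 4" "bil A v v = 0"
    using iso A unfolding isotropic_def bil_def by auto
  obtain w where "w \<in> carrier_vec 4" "bil A v w = 1" "bil A w w \<noteq> 0"
    using hyperbolic_partner[OF char2 A sym nd v z] .
  then interpret hyperbolic_pair4 A v w using char2 A sym v by unfold_locales
  show ?thesis by (rule similar_to_bil_pfister_if_detected[OF nd det])
qed

section \<open>Scalar extension to \<open>F(\<surd>\<alpha>)\<close>\<close>

text \<open>Coordinates of \<open>F\<^sup>4 \<otimes> F\<^sup>2\<close> in the index order of \<open>tensor_form\<close>.\<close>
definition interleave :: "'a vec \<Rightarrow> 'a vec \<Rightarrow> 'a vec" where
  "interleave x0 x1 = vec 8 (\<lambda>i. if even i then x0 $ (i div 2) else x1 $ (i div 2))"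

lemma interleave_carrier [simp]: "interleave x0 x1 \<in> carrier_vec 8"
  unfolding interleave_def by simp

lemma dim_interleave [simp]: "dim_vec (interleave x0 x1) = 8"
  unfolding interleave_def by simp

lemma interleaveE:
  assumes x: "x \<in> carrier_vec 8"
  obtains x0 x1 where "x0 \<in> carrier_vec 4" "x1 \<in> carrier_vec 4" "x = interleave x0 x1"
proof
  show "x = interleave (vec 4 (\<lambda>i. x $ (2*i))) (vec 4 (\<lambda>i. x $ (2*i+1)))"
  proof (rule eq_vecI)
    fix i assume "i < dim_vec (interleave (vec 4 (\<lambda>i. x $ (2*i))) (vec 4 (\<lambda>i. x $ (2*i+1))))"
    hence i: "i < 8" by (simp add: interleave_def)
    hence "i div 2 < 4" by simp
    thus "x $ i = interleave (vec 4 (\<lambda>i. x $ (2*i))) (vec 4 (\<lambda>i. x $ (2*i+1))) $ i"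
      using i by (auto simp: interleave_def)
  qed (insert x, simp add: interleave_def)
qed simp_all

lemma interleave_eq_zero:
  assumes "interleave x0 x1 = 0\<^sub>v 8" "x0 \<in> carrier_vec 4" "x1 \<in> carrier_vec 4"
  shows "x0 = 0\<^sub>v 4" "x1 = 0\<^sub>v 4"
proof -
  have "x0 $ i = 0 \<and> x1 $ i = 0" if "i < 4" for i
    using arg_cong[OF assms(1), of "\<lambda>x. x $ (2*i)"] arg_cong[OF assms(1), of "\<lambda>x. x $ (2*i+1)"] that
    by (simp add: interleave_def)
  thus "x0 = 0\<^sub>v 4" "x1 = 0\<^sub>v 4" using assms(2,3) by (auto intro!: eq_vecI)
qed

lemma tensor_pf1_carrier: "B \<in> carrier_mat 4 4 \<Longrightarrow> tensor_form B (pf1 \<alpha>) \<in> carrier_mat 8 8"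
  unfolding carrier_mat_def by simp

lemma pf1_entry: "k < 2 \<Longrightarrow> l < 2 \<Longrightarrow> pf1 a $$ (k,l) = (if k = l then (if k = 0 then 1 else a) else 0)"
  by (simp add: pf1_def)

lemma tensor_pf1_entry:
  fixes B :: "'a::field mat"
  assumes B: "B \<in> carrier_mat 4 4" and i: "i < 8" and j: "j < 8"
  shows "tensor_form B (pf1 \<alpha>) $$ (i,j) =
    B $$ (i div 2, j div 2) * (if i mod 2 = j mod 2 then (if i mod 2 = 0 then 1 else \<alpha>) else 0)"
proof -
  have "tensor_form B (pf1 \<alpha>) $$ (i,j) = B $$ (i div 2, j div 2) * pf1 \<alpha> $$ (i mod 2, j mod 2)"
    using B i j unfolding tensor_form_def by simp
  also have "pf1 \<alpha> $$ (i mod 2, j mod 2) = (if i mod 2 = j mod 2 then (if i mod 2 = 0 then 1 else \<alpha>) else 0)"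
    by (rule pf1_entry) simp_all
  finally show ?thesis .
qed

lemma bil_tensor_pf1:
  fixes B :: "'a::field mat"
  assumes B: "B \<in> carrier_mat 4 4"
    and v: "x0 \<in> carrier_vec 4" "x1 \<in> carrier_vec 4" "y0 \<in> carrier_vec 4" "y1 \<in> carrier_vec 4"
  shows "bil (tensor_form B (pf1 \<alpha>)) (interleave x0 x1) (interleave y0 y1) = bil B x0 y0 + \<alpha> * bil B x1 y1"
proof -
  let ?T = "tensor_form B (pf1 \<alpha>)"
  have mv: "(?T *\<^sub>v interleave y0 y1) $ i = (\<Sum>j\<in>{0..<8}. ?T $$ (i,j) * interleave y0 y1 $ j)"
    if "i < 8" for i
    using that B tensor_pf1_carrier[OF B, of \<alpha>] by (auto simp: scalar_prod_def intro!: sum.cong)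
  have mvB: "(B *\<^sub>v y) $ i = (\<Sum>j\<in>{0..<4}. B $$ (i,j) * y $ j)" if "i < 4" "y \<in> carrier_vec 4" for i y
    using that B by (auto simp: scalar_prod_def intro!: sum.cong)
  have L: "bil ?T (interleave x0 x1) (interleave y0 y1) =
      (\<Sum>i\<in>{0..<8}. interleave x0 x1 $ i * (?T *\<^sub>v interleave y0 y1) $ i)"
    unfolding bil_def scalar_prod_def using carrier_matD[OF B] by simp
  have R: "bil B u y = (\<Sum>i\<in>{0..<4}. u $ i * (B *\<^sub>v y) $ i)" if "u \<in> carrier_vec 4" for u y
    unfolding bil_def scalar_prod_def using that carrier_matD[OF B] by simp
  note sums = atLeast0LessThan sum_lessThan_8 sum_lessThan_4
  show ?thesis
    unfolding L R[OF v(1)] R[OF v(2)] sums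
    apply (simp del: index_mult_mat_vec add: mv mvB v)
    apply (simp add: sums tensor_pf1_entry[OF B] interleave_def algebra_simps)
    done
qed

lemma isotropic_tensor_pf1:
  fixes B :: "'a::field mat"
  assumes B: "B \<in> carrier_mat 4 4" and iso: "isotropic B"
  shows "isotropic (tensor_form B (pf1 \<alpha>))"
proof -
  obtain v where v: "v \<in> carrier_vec 4" "v \<noteq> 0\<^sub>v 4" "bil B v v = 0"
    using iso B unfolding isotropic_def bil_def by auto
  have "bil (tensor_form B (pf1 \<alpha>)) (interleave v (0\<^sub>v 4)) (interleave v (0\<^sub>v 4)) = 0"
    unfolding bil_tensor_pf1[OF B v(1) zero_carrier_vec v(1) zero_carrier_vec]
    using v(3) bil_zero_right[OF B zero_carrier_vec] by simp
  moreover have "interleave v (0\<^sub>v 4) \<noteq> 0\<^sub>v 8"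
    using interleave_eq_zero(1)[OF _ v(1) zero_carrier_vec] v(2) by blast
  ultimately show ?thesis unfolding isotropic_def bil_def using B by (intro exI[of _ "interleave v (0\<^sub>v 4)"]) auto
qed

lemma bil_expand4:
  fixes A :: "'a::field mat"
  assumes A: "A \<in> carrier_mat 4 4" and x: "x \<in> carrier_vec 4" and y: "y \<in> carrier_vec 4"
  shows "bil A x y = (\<Sum>i\<in>{0..<4}. \<Sum>j\<in>{0..<4}. x $ i * A $$ (i,j) * y $ j)"
  unfolding bil_def scalar_prod_def using A x y
  by (auto simp: sum_distrib_left mult.assoc scalar_prod_def intro!: sum.cong)

locale quadratic_extension =
  fixes emb :: "'a::field \<Rightarrow> 'b::field" and s :: 'b and \<alpha> :: 'a
  assumes hom_add: "\<And>x y. emb (x + y) = emb x + emb y"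
    and hom_mult: "\<And>x y. emb (x * y) = emb x * emb y"
    and hom_one: "emb 1 = 1"
    and sqrt: "s * s = emb \<alpha>"
    and nonsquare: "\<not> (\<exists>x. x * x = \<alpha>)"
    and spanning: "\<And>z. \<exists>x y. z = emb x + emb y * s"
begin

lemma emb_zero [simp]: "emb 0 = 0"
proof -
  have "emb 0 + emb 0 = emb 0 + 0" using hom_add[of 0 0] by simp
  thus ?thesis by (simp only: add_left_cancel)
qed

lemma emb_uminus: "emb (- x) = - emb x"
proof -
  have "emb x + emb (- x) = 0" using hom_add[of x "- x"] by simp
  thus ?thesis by (metis add.commute eq_neg_iff_add_eq_0)
qed

lemma emb_nonzero: "x \<noteq> 0 \<Longrightarrow> emb x \<noteq> 0"
  using hom_mult[of x "inverse x"] hom_one by auto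

lemma emb_eq_0_iff [simp]: "emb x = 0 \<longleftrightarrow> x = 0"
  using emb_nonzero by auto

lemma emb_inj: "emb x = emb y \<Longrightarrow> x = y"
  using hom_add[of x "- y"] emb_uminus[of y] emb_eq_0_iff[of "x + - y"] by simp

lemma char2_ext: "(2::'a) = 0 \<Longrightarrow> (2::'b) = 0"
  using hom_add[of 1 1] hom_one by (metis emb_zero one_add_one)

lemma emb_sqrt_independent:
  assumes "emb u + emb v * s = 0"
  shows "u = 0 \<and> v = 0"
proof (cases "v = 0")
  case True
  thus ?thesis using assms by simp
next
  case False
  \<comment> \<open>Otherwise \<open>s = emb (- u / v)\<close> and \<open>\<alpha>\<close> would be a square in \<open>F\<close>.\<close>
  have ev: "emb v \<noteq> 0" using emb_nonzero[OF False] .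
  have "emb (- u / v) * emb v = emb (- u)" using hom_mult[of "- u / v" v] False by simp
  hence "emb (- u / v) = - emb u / emb v" using ev by (simp add: emb_uminus field_simps)
  moreover have "s = - emb u / emb v" using assms ev by (simp add: field_simps eq_neg_iff_add_eq_0)
  ultimately have "emb ((- u / v) * (- u / v)) = emb \<alpha>" using sqrt hom_mult by metis
  hence "(- u / v) * (- u / v) = \<alpha>" by (rule emb_inj)
  thus ?thesis using nonsquare by blast
qed

definition lift :: "'a vec \<Rightarrow> 'a vec \<Rightarrow> 'b vec" where
  "lift x0 x1 = vec 4 (\<lambda>i. emb (x0 $ i) + emb (x1 $ i) * s)"

lemma lift_carrier [simp]: "lift x0 x1 \<in> carrier_vec 4"
  unfolding lift_def by simp

lemma liftE:
  assumes Y: "Y \<in> carrier_vec 4"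
  obtains y0 y1 where "y0 \<in> carrier_vec 4" "y1 \<in> carrier_vec 4" "Y = lift y0 y1"
proof -
  have "\<forall>z. \<exists>xy. z = emb (fst xy) + emb (snd xy) * s" using spanning by (metis fst_conv snd_conv)
  then obtain h where h: "\<forall>z. z = emb (fst (h z)) + emb (snd (h z)) * s" by metis
  have "Y = lift (vec 4 (\<lambda>i. fst (h (Y $ i)))) (vec 4 (\<lambda>i. snd (h (Y $ i))))"
    by (rule eq_vecI, insert Y h, auto simp: lift_def)
  from that[OF _ _ this] show ?thesis by simp
qed

end

locale scalar_extension4 = quadratic_extension emb s \<alpha>
  for emb :: "'a::field \<Rightarrow> 'b::field" and s \<alpha> +
  fixes B :: "'a mat"
  assumes char2: "(2::'a) = 0" and B: "B \<in> carrier_mat 4 4" and sym: "transpose_mat B = B"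
begin

abbreviation "T \<equiv> tensor_form B (pf1 \<alpha>)"

lemma bil_lift:
  assumes "x0 \<in> carrier_vec 4" "x1 \<in> carrier_vec 4" "y0 \<in> carrier_vec 4" "y1 \<in> carrier_vec 4"
  shows "bil (map_mat emb B) (lift x0 x1) (lift y0 y1) =
    emb (bil T (interleave x0 x1) (interleave y0 y1)) + emb (bil B x0 y1 + bil B x1 y0) * s"
proof -
  have BK: "map_mat emb B \<in> carrier_mat 4 4" using B by simp
  show ?thesis
    unfolding bil_tensor_pf1[OF B assms] bil_expand4[OF BK lift_carrier lift_carrier]
      bil_expand4[OF B assms(1,3)] bil_expand4[OF B assms(2,4)] bil_expand4[OF B assms(1,4)]
      bil_expand4[OF B assms(2,3)] atLeast0LessThan sum_lessThan_4
    using B by (simp add: lift_def hom_add hom_mult sqrt[symmetric] algebra_simps)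
qed

lemma bil_lift_self:
  assumes "x0 \<in> carrier_vec 4" "x1 \<in> carrier_vec 4"
  shows "bil (map_mat emb B) (lift x0 x1) (lift x0 x1) = emb (bil T (interleave x0 x1) (interleave x0 x1))"
  unfolding bil_lift[OF assms assms] bil_commute[OF B sym assms(2,1)] char2_add_self[OF char2] by simp

lemma sym_ext: "transpose_mat (map_mat emb B) = map_mat emb B"
proof -
  have "B $$ (j,i) = B $$ (i,j)" if "i < 4" "j < 4" for i j
    using arg_cong[OF sym, of "\<lambda>M. M $$ (i,j)"] that B by simp
  thus ?thesis using B by (intro eq_matI) auto
qed

lemma isotropic_ext:
  assumes "isotropic B"
  shows "isotropic (map_mat emb B)"
proof -
  obtain v where v: "v \<in> carrier_vec 4" "v \<noteq> 0\<^sub>v 4" "bil B v v = 0"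
    using assms B unfolding isotropic_def bil_def by auto
  have "bil (map_mat emb B) (lift v (0\<^sub>v 4)) (lift v (0\<^sub>v 4)) = 0"
    unfolding bil_lift_self[OF v(1) zero_carrier_vec] bil_tensor_pf1[OF B v(1) zero_carrier_vec v(1) zero_carrier_vec]
    using v(3) bil_zero_right[OF B zero_carrier_vec] by simp
  moreover have "lift v (0\<^sub>v 4) \<noteq> 0\<^sub>v 4"
  proof
    assume lift0: "lift v (0\<^sub>v 4) = 0\<^sub>v 4"
    have "v $ i = 0" if i: "i < 4" for i
    proof -
      have "lift v (0\<^sub>v 4) $ i = 0" using lift0 i by simp
      thus ?thesis using i by (simp add: lift_def)
    qed
    thus False using v(1,2) by (auto intro!: eq_vecI)
  qed
  ultimately show ?thesis unfolding isotropic_def bil_def using B by (intro exI[of _ "lift v (0\<^sub>v 4)"]) auto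
qed

lemma anisotropic_ext:
  assumes z: "z \<in> carrier_vec 8" "bil T z z \<noteq> 0"
  shows "\<exists>Z\<in>carrier_vec 4. bil (map_mat emb B) Z Z \<noteq> 0"
proof -
  obtain z0 z1 where "z0 \<in> carrier_vec 4" "z1 \<in> carrier_vec 4" "z = interleave z0 z1"
    using interleaveE[OF z(1)] .
  thus ?thesis using z(2) bil_lift_self by (intro bexI[of _ "lift z0 z1"]) auto
qed

lemma nondegenerate_ext:
  assumes nd: "nondegenerate T 8"
  shows "nondegenerate (map_mat emb B) 4"
  unfolding nondegenerate_def
proof (intro ballI impI)
  fix X :: "'b vec" assume X: "X \<in> carrier_vec 4" and BX: "map_mat emb B *\<^sub>v X = 0\<^sub>v 4"
  obtain x0 x1 where x: "x0 \<in> carrier_vec 4" "x1 \<in> carrier_vec 4" "X = lift x0 x1"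
    using liftE[OF X] .
  have orth: "bil B y x0 = 0 \<and> bil B y x1 = 0" if y: "y \<in> carrier_vec 4" for y
  proof -
    have "bil (map_mat emb B) (lift y (0\<^sub>v 4)) X = 0" unfolding bil_def BX by simp
    hence "emb (bil B y x0) + emb (bil B y x1) * s = 0"
      unfolding x(3) bil_lift[OF y zero_carrier_vec x(1,2)] bil_tensor_pf1[OF B y zero_carrier_vec x(1,2)]
      using bil_zero_left[OF B] x by simp
    thus ?thesis by (rule emb_sqrt_independent)
  qed
  have "T *\<^sub>v interleave x0 x1 = 0\<^sub>v 8"
  proof (rule mult_mat_vec_eq_zeroI[OF tensor_pf1_carrier[OF B] interleave_carrier])
    fix k :: nat assume "k < 8"
    obtain y0 y1 where y: "y0 \<in> carrier_vec 4" "y1 \<in> carrier_vec 4" "(unit_vec 8 k :: 'a vec) = interleave y0 y1"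
      using interleaveE[OF unit_vec_carrier] .
    show "bil T (unit_vec 8 k) (interleave x0 x1) = 0"
      unfolding y(3) bil_tensor_pf1[OF B y(1,2) x(1,2)] using orth y by simp
  qed
  hence "interleave x0 x1 = 0\<^sub>v 8" using nd unfolding nondegenerate_def by simp
  hence "x0 = 0\<^sub>v 4" "x1 = 0\<^sub>v 4" by (rule interleave_eq_zero[OF _ x(1,2)])+
  thus "X = 0\<^sub>v 4" unfolding x(3) by (intro eq_vecI) (auto simp: lift_def)
qed

lemma isotropic_detects_anisotropic_ext:
  assumes det: "isotropic_detects_anisotropic T 8"
  shows "isotropic_detects_anisotropic (map_mat emb B) 4"
  unfolding isotropic_detects_anisotropic_def
proof (intro ballI impI)
  fix Y :: "'b vec" assume Y: "Y \<in> carrier_vec 4" and qY: "bil (map_mat emb B) Y Y \<noteq> 0"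
  obtain y0 y1 where y: "y0 \<in> carrier_vec 4" "y1 \<in> carrier_vec 4" "Y = lift y0 y1"
    using liftE[OF Y] .
  have "bil T (interleave y0 y1) (interleave y0 y1) \<noteq> 0" using qY unfolding y(3) bil_lift_self[OF y(1,2)] by auto
  then obtain x where x: "x \<in> carrier_vec 8" "bil T x x = 0" "bil T x (interleave y0 y1) \<noteq> 0"
    using det unfolding isotropic_detects_anisotropic_def by auto
  obtain x0 x1 where x01: "x0 \<in> carrier_vec 4" "x1 \<in> carrier_vec 4" "x = interleave x0 x1"
    using interleaveE[OF x(1)] .
  \<comment> \<open>The \<open>F\<close>-component of \<open>\<mathfrak>b\<^sub>K(lift x0 x1, Y)\<close> is \<open>(\<mathfrak>b \<otimes> \<langle>\<langle>\<alpha>\<rangle>\<rangle>)(x, y)\<close>.\<close>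
  have "bil (map_mat emb B) (lift x0 x1) Y \<noteq> 0"
    unfolding y(3) bil_lift[OF x01(1,2) y(1,2)] using emb_sqrt_independent x x01(3) by blast
  moreover have "bil (map_mat emb B) (lift x0 x1) (lift x0 x1) = 0"
    unfolding bil_lift_self[OF x01(1,2)] using x x01(3) by simp
  ultimately show "\<exists>X\<in>carrier_vec 4. bil (map_mat emb B) X X = 0 \<and> bil (map_mat emb B) X Y \<noteq> 0"
    by (intro bexI[of _ "lift x0 x1"]) auto
qed

end

theorem lemma5p4:
  fixes B :: "'a::field mat" and \<alpha> :: 'a
    and emb :: "'a \<Rightarrow> 'b::field" and s :: 'b
  assumes char2: "(2::'a) = 0"
    and form: "sym_bil_form 4 B"
    and iso: "isotropic B"
    and alpha_unit: "\<alpha> \<noteq> 0"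
    and alpha_nonsq: "\<not> (\<exists>x. x * x = \<alpha>)"
    and hom_add: "\<And>x y. emb (x + y) = emb x + emb y"
    and hom_mult: "\<And>x y. emb (x * y) = emb x * emb y"
    and hom_one: "emb 1 = 1"
    and sqrt: "s * s = emb \<alpha>"
    and gen: "\<And>z. \<exists>x y. z = emb x + emb y * s"
    and pf: "is_bil_pfister (tensor_form B (pf1 \<alpha>))"
  shows "similar_to_bil_pfister (map_mat emb B)"
proof -
  have B: "B \<in> carrier_mat 4 4" "transpose_mat B = B" using form unfolding sym_bil_form_def by auto
  interpret K: scalar_extension4 emb s \<alpha> B
    by unfold_locales (use hom_add hom_mult hom_one sqrt alpha_nonsq gen char2 B in auto)
  have T: "K.T \<in> carrier_mat 8 8" by (rule tensor_pf1_carrier[OF B(1)])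
  have det: "isotropic_detects_anisotropic K.T 8"
    using isotropic_detects_anisotropic_bil_pfister8[OF char2 T isotropic_tensor_pf1[OF B(1) iso] pf] .
  obtain z where z: "z \<in> carrier_vec 8" "bil K.T z z = 1" using bil_pfister_represents_one[OF T pf] .
  obtain Z where "Z \<in> carrier_vec 4" "bil (map_mat emb B) Z Z \<noteq> 0"
    using K.anisotropic_ext[OF z(1)] z(2) by auto
  thus ?thesis
    using similar_to_bil_pfister_dim4[OF K.char2_ext[OF char2] _ K.sym_ext
        K.nondegenerate_ext[OF nondegenerate_bil_pfister[OF T pf]] K.isotropic_ext[OF iso] _ _
        K.isotropic_detects_anisotropic_ext[OF det]] B(1) by simp
qed

end
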